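(* Let $D$ be a digraph with at least two vertices and $s\in V(D)$ such that every vertex of $D$ is reachable from $s$, and let $B_s$ be the diblock of $s$ in $D$. Let $T$ be an out-tree in $D$ (a subgraph of $D$) whose root $r$ lies in $B_s$ and which has $\ell$ leaves. Then $D$ contains an out-tree rooted at $s$ with at least $(\ell-1)/2$ leaves.
   Context: Digraphs are finite and without loops; paths are directed. An out-tree is an oriented tree with exactly one vertex of in-degree zero (its root); its leaves are its vertices of out-degree zero. A vertex $v$ is bi-reachable from $r$ if there are two internally vertex-disjoint directed paths from $r$ to $v$. For a digraph $H$ with at least two vertices and $r\in V(H)$ such that every vertex of $H$ is reachable from $r$, the diblock $B_r$ of $r$ in $H$ is the set of all vertices bi-reachable from $r$, together with $r$ and all out-neighbours of $r$. *)

theory Defs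
  imports Complex_Main
begin

definition digraph :: "'a set \<Rightarrow> ('a \<times> 'a) set \<Rightarrow> bool" where
  "digraph V A \<longleftrightarrow> finite V \<and> A \<subseteq> V \<times> V \<and> (\<forall>v. (v, v) \<notin> A)"

definition dipath :: "('a \<times> 'a) set \<Rightarrow> 'a \<Rightarrow> 'a \<Rightarrow> 'a list \<Rightarrow> bool" where
  "dipath A u v p \<longleftrightarrow> p \<noteq> [] \<and> distinct p \<and> hd p = u \<and> last p = v \<and>
     (\<forall>i. Suc i < length p \<longrightarrow> (p ! i, p ! Suc i) \<in> A)"

definition bireachable :: "('a \<times> 'a) set \<Rightarrow> 'a \<Rightarrow> 'a \<Rightarrow> bool" where
  "bireachable A r v \<longleftrightarrow> (\<exists>p q. dipath A r v p \<and> dipath A r v q \<and> p \<noteq> q \<and>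
      set p \<inter> set q \<subseteq> {r, v})"

definition diblock :: "'a set \<Rightarrow> ('a \<times> 'a) set \<Rightarrow> 'a \<Rightarrow> 'a set" where
  "diblock V A r = {v \<in> V. bireachable A r v} \<union> {r} \<union> {v. (r, v) \<in> A}"

definition in_degree :: "('a \<times> 'a) set \<Rightarrow> 'a \<Rightarrow> nat" where
  "in_degree A v = card {u. (u, v) \<in> A}"

definition out_degree :: "('a \<times> 'a) set \<Rightarrow> 'a \<Rightarrow> nat" where
  "out_degree A v = card {w. (v, w) \<in> A}"

definition oriented_tree :: "'a set \<Rightarrow> ('a \<times> 'a) set \<Rightarrow> bool" where
  "oriented_tree VT AT \<longleftrightarrow> finite VT \<and> VT \<noteq> {} \<and> AT \<subseteq> VT \<times> VT \<and>
     (\<forall>v. (v, v) \<notin> AT) \<and> AT \<inter> AT\<inverse> = {} \<and>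
     (\<forall>x\<in>VT. \<forall>y\<in>VT. (x, y) \<in> (AT \<union> AT\<inverse>)\<^sup>*) \<and>
     card AT = card VT - 1"

definition out_tree :: "'a set \<Rightarrow> ('a \<times> 'a) set \<Rightarrow> 'a \<Rightarrow> bool" where
  "out_tree VT AT r \<longleftrightarrow> oriented_tree VT AT \<and> r \<in> VT \<and>
     {v \<in> VT. in_degree AT v = 0} = {r}"

definition leaves :: "'a set \<Rightarrow> ('a \<times> 'a) set \<Rightarrow> 'a set" where
  "leaves VT AT = {v \<in> VT. out_degree AT v = 0}"

end

theory Submission
  imports Defs
begin

text \<open>Grafting a path P from s to r onto an out-tree T rooted at r, i.e. replacing every
  tree arc entering a vertex of P by the arc of P entering it, yields an out-tree rooted
  at s that keeps every leaf of T outside the interior of P. Since r lies in the diblock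
  of s there are two such paths whose interiors meet at most in s, so the two grafted
  trees together keep all leaves of T except possibly s, and one of them keeps at least
  half of them.\<close>

lemma finite_in_arcs: "finite AT \<Longrightarrow> finite {u. (u, v) \<in> AT}"
  by (rule finite_subset[of _ "fst ` AT"]) force+

lemma finite_out_arcs: "finite AT \<Longrightarrow> finite {w. (v, w) \<in> AT}"
  by (rule finite_subset[of _ "snd ` AT"]) force+

lemma in_degree_eq_0_iff: "finite AT \<Longrightarrow> in_degree AT v = 0 \<longleftrightarrow> (\<forall>u. (u, v) \<notin> AT)"
  by (simp add: in_degree_def finite_in_arcs)

lemma leaves_iff: "finite AT \<Longrightarrow> v \<in> leaves VT AT \<longleftrightarrow> v \<in> VT \<and> (\<forall>w. (v, w) \<notin> AT)"
  by (simp add: leaves_def out_degree_def finite_out_arcs)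

lemma card_arcs_eq_sum_in_degree:
  assumes "finite VT" "AT \<subseteq> VT \<times> VT"
  shows "card AT = (\<Sum>v\<in>VT. in_degree AT v)"
proof -
  have "prod.swap ` AT = (SIGMA v:VT. {u. (u, v) \<in> AT})" using assms(2) by force
  moreover have "card (prod.swap ` AT) = card AT" by (rule card_image) (auto simp: inj_on_def)
  moreover have "finite AT" using assms finite_subset by blast
  ultimately show ?thesis
    using assms(1) by (simp add: finite_in_arcs in_degree_def)
qed

lemma out_treeD:
  assumes "out_tree VT AT r"
  shows "finite VT" "AT \<subseteq> VT \<times> VT" "r \<in> VT" "finite AT"
  using assms unfolding out_tree_def oriented_tree_def
  by (auto intro: finite_subset[of AT "VT \<times> VT"])

lemma out_tree_in_degree_eq_0_iff:
  assumes "out_tree VT AT r" "v \<in> VT"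
  shows "in_degree AT v = 0 \<longleftrightarrow> v = r"
proof -
  have "{v \<in> VT. in_degree AT v = 0} = {r}" using assms(1) by (simp add: out_tree_def)
  then show ?thesis using assms(2) by (metis (mono_tags) mem_Collect_eq singleton_iff)
qed

lemma out_tree_no_arc_into_root:
  assumes "out_tree VT AT r"
  shows "(u, r) \<notin> AT"
  using out_tree_in_degree_eq_0_iff[OF assms out_treeD(3)[OF assms]] out_treeD(4)[OF assms]
  by (simp add: in_degree_eq_0_iff)

lemma out_tree_in_degree_eq_1:
  assumes T: "out_tree VT AT r" and v: "v \<in> VT" "v \<noteq> r"
  shows "in_degree AT v = 1"
proof (rule ccontr)
  assume ne: "in_degree AT v \<noteq> 1"
  have fin: "finite VT" and sub: "AT \<subseteq> VT \<times> VT" and r: "r \<in> VT"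
    using out_treeD[OF T] by auto
  have pos: "\<forall>w\<in>VT - {r}. 1 \<le> in_degree AT w"
    using out_tree_in_degree_eq_0_iff[OF T] by (metis Diff_iff One_nat_def Suc_leI neq0_conv singletonI)
  have "in_degree AT r = 0" using out_tree_in_degree_eq_0_iff[OF T r] by simp
  then have "card AT = (\<Sum>w\<in>VT - {r}. in_degree AT w)"
    using card_arcs_eq_sum_in_degree[OF fin sub] fin r by (simp add: sum.remove)
  moreover have "(\<Sum>w\<in>VT - {r}. 1) < (\<Sum>w\<in>VT - {r}. in_degree AT w)"
  proof (rule sum_strict_mono_ex1)
    show "\<exists>w\<in>VT - {r}. 1 < in_degree AT w" using pos ne v by force
  qed (use fin pos in auto)
  moreover have "card AT = card VT - 1"
    using T unfolding out_tree_def oriented_tree_def by blast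
  ultimately show False using fin r by simp
qed

lemma out_tree_unique_parent:
  assumes T: "out_tree VT AT r" and "(u, v) \<in> AT" "(u', v) \<in> AT"
  shows "u = u'"
proof -
  have "v \<in> VT" "v \<noteq> r"
    using assms out_treeD(2)[OF T] out_tree_no_arc_into_root[OF T] by auto
  then obtain x where "{u. (u, v) \<in> AT} = {x}"
    using out_tree_in_degree_eq_1[OF T] by (auto simp: in_degree_def card_Suc_eq)
  then show ?thesis using assms(2,3) by (metis mem_Collect_eq singletonD)
qed

lemma out_tree_reachable_from_root:
  assumes T: "out_tree VT AT r" and "v \<in> VT"
  shows "(r, v) \<in> AT\<^sup>*"
proof -
  have "(r, v) \<in> (AT \<union> AT\<inverse>)\<^sup>*"
    using assms out_treeD(3)[OF T] unfolding out_tree_def oriented_tree_def by auto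
  then show ?thesis
  proof (induction rule: rtrancl_induct)
    case (step y z)
    show ?case
    proof (cases "(y, z) \<in> AT")
      case False
      then have zy: "(z, y) \<in> AT" using step by auto
      then have "y \<noteq> r" using out_tree_no_arc_into_root[OF T] by auto
      then obtain w where "(r, w) \<in> AT\<^sup>*" "(w, y) \<in> AT"
        using step.IH by (auto elim: rtranclE)
      moreover have "w = z" using out_tree_unique_parent[OF T \<open>(w, y) \<in> AT\<close> zy] .
      ultimately show ?thesis by simp
    qed (use step in auto)
  qed simp
qed

lemma unique_parent_acyclic:
  assumes no_arc_into_root: "\<And>u. (u, r) \<notin> AT"
    and unique_parent: "\<And>u u' v. (u, v) \<in> AT \<Longrightarrow> (u', v) \<in> AT \<Longrightarrow> u = u'"
    and "(r, v) \<in> AT\<^sup>*"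
  shows "(v, v) \<notin> AT\<^sup>+"
  using assms(3)
proof (induction rule: rtrancl_induct)
  case base
  show ?case using no_arc_into_root by (auto elim: tranclE)
next
  case (step y z)
  show ?case
  proof
    assume "(z, z) \<in> AT\<^sup>+"
    then obtain c where "(z, c) \<in> AT\<^sup>*" "(c, z) \<in> AT" by (blast dest: tranclD2)
    then have "c = y" using unique_parent step(2) by blast
    then have "(y, y) \<in> AT\<^sup>+"
      using \<open>(z, c) \<in> AT\<^sup>*\<close> step(2) by (simp add: rtrancl_into_trancl2)
    then show False using step.IH by simp
  qed
qed

lemma connected_if_reachable_from_root:
  assumes "\<And>v. v \<in> VT \<Longrightarrow> (r, v) \<in> AT\<^sup>*"
  shows "\<forall>x\<in>VT. \<forall>y\<in>VT. (x, y) \<in> (AT \<union> AT\<inverse>)\<^sup>*"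
proof (intro ballI)
  fix x y assume "x \<in> VT" "y \<in> VT"
  have from_root: "(r, z) \<in> (AT \<union> AT\<inverse>)\<^sup>*" if "z \<in> VT" for z
    using rtrancl_mono[of AT "AT \<union> AT\<inverse>"] assms[OF that] by blast
  have "(x, r) \<in> ((AT \<union> AT\<inverse>)\<inverse>)\<^sup>*"
    using from_root[OF \<open>x \<in> VT\<close>] by (rule rtrancl_converseI)
  moreover have "(AT \<union> AT\<inverse>)\<inverse> = AT \<union> AT\<inverse>" by auto
  ultimately show "(x, y) \<in> (AT \<union> AT\<inverse>)\<^sup>*"
    using from_root[OF \<open>y \<in> VT\<close>] by simp
qed

lemma card_arcs_unique_parent:
  assumes "finite VT" "r \<in> VT" "snd ` AT = VT - {r}"
    and unique_parent: "\<And>u u' v. (u, v) \<in> AT \<Longrightarrow> (u', v) \<in> AT \<Longrightarrow> u = u'"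
  shows "card AT = card VT - 1"
proof -
  have "inj_on snd AT"
  proof (rule inj_onI)
    fix e e' assume "e \<in> AT" "e' \<in> AT" "snd e = snd e'"
    then show "e = e'" using unique_parent[of "fst e" "snd e" "fst e'"] by (metis prod.collapse)
  qed
  then have "card AT = card (VT - {r})" using assms(3) by (metis card_image)
  then show ?thesis using assms(1,2) by simp
qed

lemma out_treeI:
  assumes fin: "finite VT" and r: "r \<in> VT" and sub: "AT \<subseteq> VT \<times> VT"
    and no_arc_into_root: "\<And>u. (u, r) \<notin> AT"
    and unique_parent: "\<And>u u' v. (u, v) \<in> AT \<Longrightarrow> (u', v) \<in> AT \<Longrightarrow> u = u'"
    and reach: "\<And>v. v \<in> VT \<Longrightarrow> (r, v) \<in> AT\<^sup>*"
  shows "out_tree VT AT r"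
proof -
  have acyclic: "(v, v) \<notin> AT\<^sup>+" for v
  proof
    assume cycle: "(v, v) \<in> AT\<^sup>+"
    then have "v \<in> VT" using sub by (auto elim: converse_tranclE)
    have "(v, v) \<notin> AT\<^sup>+"
      using no_arc_into_root unique_parent reach[OF \<open>v \<in> VT\<close>] by (rule unique_parent_acyclic)
    then show False using cycle by contradiction
  qed
  have antisym: "AT \<inter> AT\<inverse> = {}"
  proof (rule ccontr)
    assume "AT \<inter> AT\<inverse> \<noteq> {}"
    then obtain u v where "(u, v) \<in> AT" "(v, u) \<in> AT" by auto
    then have "(u, u) \<in> AT\<^sup>+" by (simp add: trancl_into_trancl2)
    then show False using acyclic by contradiction
  qed
  have entered: "(\<exists>u. (u, v) \<in> AT) \<longleftrightarrow> v \<in> VT - {r}" for v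
  proof
    assume "\<exists>u. (u, v) \<in> AT"
    then show "v \<in> VT - {r}" using sub no_arc_into_root by blast
  next
    assume "v \<in> VT - {r}"
    then show "\<exists>u. (u, v) \<in> AT" using reach[of v] by (blast elim: rtranclE)
  qed
  have "finite AT" using fin sub finite_subset by blast
  then have roots: "{v \<in> VT. in_degree AT v = 0} = {r}"
    using entered r by (auto simp: in_degree_eq_0_iff)
  have "snd ` AT = VT - {r}"
  proof
    show "snd ` AT \<subseteq> VT - {r}" using entered by fastforce
    show "VT - {r} \<subseteq> snd ` AT"
    proof
      fix v assume "v \<in> VT - {r}"
      then obtain u where "(u, v) \<in> AT" using entered by blast
      then show "v \<in> snd ` AT" by force
    qed
  qed
  from fin r this unique_parent have "card AT = card VT - 1" by (rule card_arcs_unique_parent)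
  moreover have "\<forall>v. (v, v) \<notin> AT" using acyclic by blast
  ultimately show ?thesis
    using fin r sub antisym connected_if_reachable_from_root[OF reach] roots
    unfolding out_tree_def oriented_tree_def by blast
qed

definition path_arcs :: "'a list \<Rightarrow> ('a \<times> 'a) set" where
  "path_arcs p = {(p ! i, p ! Suc i) | i. Suc i < length p}"

lemma path_arcs_subset: "path_arcs p \<subseteq> set p \<times> set p"
  by (auto simp: path_arcs_def)

lemma dipath_path_arcs_subset: "dipath A u v p \<Longrightarrow> path_arcs p \<subseteq> A"
  by (auto simp: path_arcs_def dipath_def)

lemma distinct_path_arcs_unique_parent:
  assumes "distinct p" "(u, v) \<in> path_arcs p" "(u', v) \<in> path_arcs p"
  shows "u = u'"
  using assms nth_eq_iff_index_eq[OF assms(1)] by (fastforce simp: path_arcs_def)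

lemma distinct_path_arcs_not_into_hd:
  assumes "distinct p" "p \<noteq> []"
  shows "(u, hd p) \<notin> path_arcs p"
  using assms nth_eq_iff_index_eq[OF assms(1)] by (fastforce simp: path_arcs_def hd_conv_nth)

lemma distinct_path_arcs_not_from_last:
  assumes "distinct p" "p \<noteq> []"
  shows "(last p, w) \<notin> path_arcs p"
  using assms nth_eq_iff_index_eq[OF assms(1)] by (fastforce simp: path_arcs_def last_conv_nth)

lemma path_arcs_reachable_from_hd:
  assumes "v \<in> set p"
  shows "(hd p, v) \<in> (path_arcs p)\<^sup>*"
proof -
  have "(hd p, p ! k) \<in> (path_arcs p)\<^sup>*" if "k < length p" for k
    using that
  proof (induction k)
    case 0
    then show ?case by (simp add: hd_conv_nth)
  next
    case (Suc k)
    then have "(p ! k, p ! Suc k) \<in> path_arcs p" by (auto simp: path_arcs_def)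
    with Suc show ?case by (meson Suc_lessD rtrancl.rtrancl_into_rtrancl)
  qed
  then show ?thesis using assms by (auto simp: in_set_conv_nth)
qed

definition graft_path :: "('a \<times> 'a) set \<Rightarrow> 'a list \<Rightarrow> ('a \<times> 'a) set" where
  "graft_path AT p = {e \<in> AT. snd e \<notin> set p} \<union> path_arcs p"

lemma out_tree_graft_path:
  assumes T: "out_tree VT AT r" and P: "dipath A s r p"
  shows "out_tree (VT \<union> set p) (graft_path AT p) s"
proof -
  have p: "p \<noteq> []" "distinct p" "hd p = s" "last p = r"
    using P by (auto simp: dipath_def)
  have reach_path: "v \<in> set p \<Longrightarrow> (s, v) \<in> (graft_path AT p)\<^sup>*" for v
    using path_arcs_reachable_from_hd[of v p] p(3) rtrancl_mono[of "path_arcs p"]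
    by (auto simp: graft_path_def)
  have reach_tree: "(s, v) \<in> (graft_path AT p)\<^sup>*" if "(r, v) \<in> AT\<^sup>*" for v
    using that
  proof (induction rule: rtrancl_induct)
    case base
    show ?case using reach_path p by auto
  next
    case (step y z)
    show ?case
    proof (cases "z \<in> set p")
      case False
      then have "(y, z) \<in> graft_path AT p" using step by (auto simp: graft_path_def)
      with step.IH show ?thesis by (rule rtrancl_into_rtrancl)
    qed (rule reach_path)
  qed
  show ?thesis
  proof (rule out_treeI)
    show "finite (VT \<union> set p)" using out_treeD(1)[OF T] by simp
    show "s \<in> VT \<union> set p" using p by auto
    show "graft_path AT p \<subseteq> (VT \<union> set p) \<times> (VT \<union> set p)"
      using out_treeD(2)[OF T] path_arcs_subset[of p] by (auto simp: graft_path_def)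
    show "(u, s) \<notin> graft_path AT p" for u
      using p distinct_path_arcs_not_into_hd[of p] by (auto simp: graft_path_def)
    show "u = u'" if "(u, v) \<in> graft_path AT p" "(u', v) \<in> graft_path AT p" for u u' v
    proof (cases "v \<in> set p")
      case True
      then have "(u, v) \<in> path_arcs p" "(u', v) \<in> path_arcs p"
        using that by (auto simp: graft_path_def)
      then show ?thesis by (rule distinct_path_arcs_unique_parent[OF p(2)])
    next
      case False
      then have "(u, v) \<in> AT" "(u', v) \<in> AT"
        using that path_arcs_subset[of p] by (auto simp: graft_path_def)
      then show ?thesis by (rule out_tree_unique_parent[OF T])
    qed
    show "(s, v) \<in> (graft_path AT p)\<^sup>*" if "v \<in> VT \<union> set p" for v
      using that reach_path reach_tree out_tree_reachable_from_root[OF T] by blast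
  qed
qed

lemma graft_path_subset: "AT \<subseteq> A \<Longrightarrow> dipath A s r p \<Longrightarrow> graft_path AT p \<subseteq> A"
  using dipath_path_arcs_subset by (fastforce simp: graft_path_def)

lemma leaves_graft_path:
  assumes T: "out_tree VT AT r" and P: "dipath A s r p"
  shows "leaves VT AT - (set p - {r}) \<subseteq> leaves (VT \<union> set p) (graft_path AT p)"
proof
  fix v assume v: "v \<in> leaves VT AT - (set p - {r})"
  then have "v \<in> VT" "\<forall>w. (v, w) \<notin> AT" using leaves_iff[OF out_treeD(4)[OF T]] by auto
  moreover have "(v, w) \<notin> path_arcs p" for w
  proof (cases "v \<in> set p")
    case True
    then have "v = last p" using v P by (simp add: dipath_def)
    then show ?thesis using P distinct_path_arcs_not_from_last[of p] by (simp add: dipath_def)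
  qed (use path_arcs_subset[of p] in auto)
  moreover have "finite (graft_path AT p)" using out_treeD(4)[OF out_tree_graft_path[OF T P]] .
  ultimately show "v \<in> leaves (VT \<union> set p) (graft_path AT p)"
    by (simp add: leaves_iff graft_path_def)
qed

lemma dipath_set_subset:
  assumes P: "dipath A s v p" and "A \<subseteq> V \<times> V" "s \<in> V"
  shows "set p \<subseteq> V"
proof
  fix x assume "x \<in> set p"
  then obtain k where k: "k < length p" "x = p ! k" by (auto simp: in_set_conv_nth)
  show "x \<in> V"
  proof (cases k)
    case 0
    then have "x = hd p" using k P by (simp add: dipath_def hd_conv_nth)
    then show ?thesis using P assms(3) by (simp add: dipath_def)
  next
    case (Suc j)
    then have "(p ! j, x) \<in> A" using P k unfolding dipath_def by blast
    then show ?thesis using assms(2) by blast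
  qed
qed

lemma card_leaves_le_two_grafts:
  assumes T: "out_tree VT AT r"
    and pq: "dipath A s r p" "dipath A s r q" "set p \<inter> set q \<subseteq> {s, r}"
  shows "card (leaves VT AT) \<le>
    card (leaves (VT \<union> set p) (graft_path AT p)) + card (leaves (VT \<union> set q) (graft_path AT q)) + 1"
proof -
  let ?L = "leaves VT AT" and ?L' = "\<lambda>p. leaves (VT \<union> set p) (graft_path AT p)"
  have fin: "finite ?L" "finite (?L' p')" for p'
    using out_treeD(1)[OF T] by (simp_all add: leaves_def)
  have "?L - {s} \<subseteq> (?L - (set p - {r})) \<union> (?L - (set q - {r}))"
    using pq(3) by blast
  also have "\<dots> \<subseteq> ?L' p \<union> ?L' q"
    using leaves_graft_path[OF T] pq(1,2) by blast
  finally have "card (?L - {s}) \<le> card (?L' p) + card (?L' q)"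
    using fin card_Un_le card_mono[of "?L' p \<union> ?L' q"] by (meson finite_UnI order_trans)
  moreover have "card ?L \<le> card (?L - {s}) + 1"
    using fin(1) by (cases "s \<in> ?L") (auto simp: card_Diff_singleton)
  ultimately show ?thesis by linarith
qed

text \<open>For an out-neighbour r of s, or r = s itself, both paths are the same trivial one.\<close>

lemma diblock_two_paths:
  assumes "digraph V A" and "r \<in> diblock V A s"
  obtains p q where "dipath A s r p" "dipath A s r q" "set p \<inter> set q \<subseteq> {s, r}"
proof -
  consider "bireachable A s r" | "r = s" | "(s, r) \<in> A"
    using assms(2) unfolding diblock_def by auto
  then show ?thesis
  proof cases
    case 1
    then show ?thesis using that unfolding bireachable_def by blast
  next
    case 2
    then have P: "dipath A s r [s]" by (simp add: dipath_def)
    show ?thesis by (rule that[OF P P]) auto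
  next
    case 3
    moreover have "s \<noteq> r" using 3 assms(1) by (auto simp: digraph_def)
    ultimately have P: "dipath A s r [s, r]" by (simp add: dipath_def less_Suc_eq)
    show ?thesis by (rule that[OF P P]) auto
  qed
qed

text \<open>The hypotheses that s reaches every vertex and that there are at least two
  vertices only make the diblock meaningful; the argument does not need them.\<close>

theorem lemma4:
  fixes V :: "'a set" and A :: "('a \<times> 'a) set" and s r :: 'a
    and VT :: "'a set" and AT :: "('a \<times> 'a) set" and l :: nat
  assumes "digraph V A"
    and "card V \<ge> 2"
    and "s \<in> V"
    and "\<forall>v\<in>V. (s, v) \<in> A\<^sup>*"
    and "VT \<subseteq> V" and "AT \<subseteq> A"
    and "out_tree VT AT r"
    and "r \<in> diblock V A s"
    and "card (leaves VT AT) = l"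
  shows "\<exists>VT' AT'. VT' \<subseteq> V \<and> AT' \<subseteq> A \<and> out_tree VT' AT' s \<and>
           real (card (leaves VT' AT')) \<ge> (real l - 1) / 2"
proof -
  obtain p q where pq: "dipath A s r p" "dipath A s r q" "set p \<inter> set q \<subseteq> {s, r}"
    using diblock_two_paths[OF assms(1,8)] .
  let ?L' = "\<lambda>p. leaves (VT \<union> set p) (graft_path AT p)"
  define best where "best = (if card (?L' q) \<le> card (?L' p) then p else q)"
  have best: "dipath A s r best" using pq(1,2) by (simp add: best_def)
  have "l \<le> card (?L' p) + card (?L' q) + 1"
    using card_leaves_le_two_grafts[OF assms(7) pq] assms(9) by simp
  moreover have "card (?L' p) + card (?L' q) \<le> 2 * card (?L' best)" by (simp add: best_def)
  ultimately have "real l \<le> real (2 * card (?L' best) + 1)" by linarith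
  then have "(real l - 1) / 2 \<le> real (card (?L' best))" by simp
  moreover have "VT \<union> set best \<subseteq> V"
    using assms(1,3,5) dipath_set_subset[OF best] by (auto simp: digraph_def)
  ultimately show ?thesis
    using graft_path_subset[OF assms(6) best] out_tree_graft_path[OF assms(7) best] by blast
qed

end
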